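(* Let $K,k,l\in\mathbb{N}$ with $K\ge k+l$ and $0\le l-k\le 2$. Let $\bar a,\bar b$ be binary sequences with $|\bar a|\ge|\bar b|$ such that $\bar a$ is top $l$ full and $\bar b$ is top $k$ full. Then $\mathrm{oe\_combine}_K(\bar a,\bar b)$ is top $l+k$ full.
   Context: A binary sequence $\bar r$ is top $k'$ full if it has the form $1^{k'}\bar r'$ for some binary $\bar r'$ (in particular $|\bar r|\ge k'$). For sequences $\bar a=\langle a_1,\dots,a_p\rangle$, $\bar b=\langle b_1,\dots,b_q\rangle$ with $p\ge q$, $\mathrm{zip}(\bar a,\bar b)=\langle a_1,b_1,a_2,b_2,\dots,a_q,b_q,a_{q+1},\dots,a_p\rangle$. The network $\mathrm{oe\_combine}_K(\bar a,\bar b)$ is defined as: let $\bar z=\mathrm{zip}(\bar a,\bar b)$; for each $i=1,\dots,\lfloor\min(K,|\bar z|-1)/2\rfloor$ replace the pair $(z_{2i},z_{2i+1})$ by $(\max(z_{2i},z_{2i+1}),\min(z_{2i},z_{2i+1}))$; return $\bar z$. *)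

theory Defs
  imports Main
begin

definition binary :: "nat list \<Rightarrow> bool" where
  "binary r \<longleftrightarrow> set r \<subseteq> {0, 1}"

definition top_full :: "nat \<Rightarrow> nat list \<Rightarrow> bool" where
  "top_full k r \<longleftrightarrow> (\<exists>r'. r = replicate k 1 @ r')"

fun zipseq :: "'a list \<Rightarrow> 'a list \<Rightarrow> 'a list" where
  "zipseq (x # xs) (y # ys) = x # y # zipseq xs ys"
| "zipseq xs [] = xs"
| "zipseq [] ys = ys"

text \<open>With 0-based list indices, the 1-based pair (z_{2i}, z_{2i+1}) is at positions
  (2i-1, 2i); for i = 1..m these are exactly the positions 1..2m.\<close>
definition oe_combine :: "nat \<Rightarrow> nat list \<Rightarrow> nat list \<Rightarrow> nat list" where
  "oe_combine K a b =
     (let z = zipseq a b; m = min K (length z - 1) div 2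
      in map (\<lambda>j. if 1 \<le> j \<and> j \<le> 2 * m
                    then (if odd j then max (z ! j) (z ! (j + 1))
                          else min (z ! (j - 1)) (z ! j))
                    else z ! j) [0..<length z])"

end

theory Submission
  imports Defs
begin

text \<open>Interleaving the top l ones of a with the top k ones of b gives ones in every position
  below l + k, except that when l = k + 2 the position 2k + 1 (counting from 0) holds b ! k,
  which may be 0. That position is the upper half of a comparator whose lower half holds
  a ! (k + 1) = 1, so afterwards it holds a 1 as well; every other comparator touching the
  prefix compares two ones.\<close>

lemma top_full_iff: "top_full n r \<longleftrightarrow> n \<le> length r \<and> (\<forall>j<n. r ! j = 1)"
proof
  assume "top_full n r"
  then obtain r' where "r = replicate n 1 @ r'"
    unfolding top_full_def by blast
  then show "n \<le> length r \<and> (\<forall>j<n. r ! j = 1)"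
    by (simp add: nth_append)
next
  assume "n \<le> length r \<and> (\<forall>j<n. r ! j = 1)"
  then have "take n r = replicate n 1"
    by (simp add: list_eq_iff_nth_eq)
  then have "r = replicate n 1 @ drop n r"
    by (metis append_take_drop_id)
  then show "top_full n r"
    unfolding top_full_def by blast
qed

lemma length_zipseq [simp]: "length (zipseq a b) = length a + length b"
  by (induction a b rule: zipseq.induct) auto

lemma set_zipseq: "set (zipseq a b) \<subseteq> set a \<union> set b"
  by (induction a b rule: zipseq.induct) auto

lemma binary_zipseq: "binary a \<Longrightarrow> binary b \<Longrightarrow> binary (zipseq a b)"
  unfolding binary_def using set_zipseq[of a b] by auto

lemma nth_zipseq:
  assumes "length b \<le> length a"
  shows "zipseq a b ! j =
    (if j < 2 * length b then (if even j then a ! (j div 2) else b ! (j div 2))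
     else a ! (j - length b))"
  using assms
proof (induction a b arbitrary: j rule: zipseq.induct)
  case (1 x xs y ys)
  consider "j = 0" | "j = 1" | j' where "j = j' + 2"
    by (metis One_nat_def add_2_eq_Suc' not0_implies_Suc)
  then show ?case
  proof cases
    case 3
    have "zipseq xs ys ! j' =
      (if j' < 2 * length ys then (if even j' then xs ! (j' div 2) else ys ! (j' div 2))
       else xs ! (j' - length ys))"
      using 1 by simp
    moreover have "j' + 2 - length (y # ys) = Suc (j' - length ys)" if "\<not> j' < 2 * length ys"
      using that by simp
    ultimately show ?thesis
      using 3 by simp
  qed simp_all
qed auto

definition compare_pairs :: "nat \<Rightarrow> nat list \<Rightarrow> nat list" where
  "compare_pairs m z =
     map (\<lambda>j. if 1 \<le> j \<and> j \<le> 2 * m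
               then (if odd j then max (z ! j) (z ! (j + 1)) else min (z ! (j - 1)) (z ! j))
               else z ! j) [0..<length z]"

lemma oe_combine_eq_compare_pairs:
  "oe_combine K a b = compare_pairs (min K (length (zipseq a b) - 1) div 2) (zipseq a b)"
  unfolding oe_combine_def compare_pairs_def Let_def ..

lemma length_compare_pairs [simp]: "length (compare_pairs m z) = length z"
  by (simp add: compare_pairs_def)

lemma nth_compare_pairs:
  "j < length z \<Longrightarrow> compare_pairs m z ! j =
     (if 1 \<le> j \<and> j \<le> 2 * m
      then (if odd j then max (z ! j) (z ! (j + 1)) else min (z ! (j - 1)) (z ! j))
      else z ! j)"
  by (simp add: compare_pairs_def del: upt_Suc)

lemma compare_pairs_top_full:
  assumes bin: "binary z" and m: "2 * m \<le> length z - 1" and n: "n \<le> length z"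
    and ones: "\<And>j. j < n \<Longrightarrow> z ! j = 1 \<or> (j + 1 = n \<and> odd j \<and> j < 2 * m \<and> z ! n = 1)"
  shows "top_full n (compare_pairs m z)"
  unfolding top_full_iff
proof (intro conjI allI impI)
  show "n \<le> length (compare_pairs m z)" using n by simp
next
  fix j assume j: "j < n"
  have le1: "z ! i \<le> 1" if "i < length z" for i
    using bin nth_mem[OF that] unfolding binary_def by auto
  consider (one) "z ! j = 1" | (partner) "j + 1 = n" "odd j" "j < 2 * m" "z ! n = 1"
    using ones[OF j] by blast
  then show "compare_pairs m z ! j = 1"
  proof cases
    case one
    have jz: "j < length z" using j n by simp
    show ?thesis
    proof (cases "1 \<le> j \<and> j \<le> 2 * m")
      case comparator: True
      show ?thesis
      proof (cases "odd j")
        case True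
        then have "j \<noteq> 2 * m" by auto
        with comparator m have "z ! (j + 1) \<le> 1" by (intro le1) linarith
        with True comparator one jz show ?thesis by (simp add: nth_compare_pairs)
      next
        case False
        have "j - 1 < n" "j - 1 + 1 \<noteq> n" using comparator j by linarith+
        then have "z ! (j - 1) = 1" using ones by blast
        with False comparator one jz show ?thesis by (simp add: nth_compare_pairs)
      qed
    next
      case False
      with one jz show ?thesis by (auto simp: nth_compare_pairs)
    qed
  next
    case partner
    then show ?thesis
      using le1[of j] odd_pos[of j] j n by (simp add: nth_compare_pairs max_def)
  qed
qed

lemma zipseq_almost_top_full:
  assumes "k \<le> l" and "l \<le> k + 2" and "length b \<le> length a"
    and "top_full l a" and "top_full k b" and "j < l + k"
  shows "zipseq a b ! j = 1 \<or>
    (j + 1 = l + k \<and> odd j \<and> l + k < length (zipseq a b) \<and> zipseq a b ! (l + k) = 1)"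
proof -
  have a: "l \<le> length a" "\<And>i. i < l \<Longrightarrow> a ! i = 1"
    and b: "k \<le> length b" "\<And>i. i < k \<Longrightarrow> b ! i = 1"
    using assms(4,5) by (auto simp: top_full_iff)
  show ?thesis
  proof (cases "j < 2 * length b \<and> odd j \<and> j div 2 = k")
    case True
    then have j: "j = 2 * k + 1" "k < length b" by auto
    with assms(2,6) have l: "l = k + 2" by simp
    have "zipseq a b ! (2 * k + 2) = a ! (k + 1)"
    proof (cases "k + 1 < length b")
      case False
      with j(2) have "length b = k + 1" by simp
      with assms(3) show ?thesis by (simp add: nth_zipseq)
    qed (use assms(3) in \<open>simp add: nth_zipseq\<close>)
    then show ?thesis
      using j l a assms(3) by (auto simp: mult_2)
  next
    case False
    then show ?thesis
      using assms a b by (auto simp: nth_zipseq)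
  qed
qed

theorem mainTheorem6:
  fixes K k l :: nat and a b :: "nat list"
  assumes "K \<ge> k + l" and "k \<le> l" and "l - k \<le> 2"
    and "binary a" and "binary b" and "length a \<ge> length b"
    and "top_full l a" and "top_full k b"
  shows "top_full (l + k) (oe_combine K a b)"
proof -
  define z where "z = zipseq a b"
  define m where "m = min K (length z - 1) div 2"
  have "l + k \<le> length z"
    using assms(7,8) by (simp add: z_def top_full_iff)
  moreover have "2 * m \<le> length z - 1"
    unfolding m_def by linarith
  moreover have "z ! j = 1 \<or> (j + 1 = l + k \<and> odd j \<and> j < 2 * m \<and> z ! (l + k) = 1)"
    if "j < l + k" for j
  proof -
    have "z ! j = 1 \<or> (j + 1 = l + k \<and> odd j \<and> l + k < length z \<and> z ! (l + k) = 1)"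
      using zipseq_almost_top_full[OF assms(2) _ assms(6-8) that] assms(3) unfolding z_def by simp
    moreover have "j < 2 * m" if "j + 1 = l + k" "odd j" "l + k < length z"
    proof -
      have "l + k \<le> min K (length z - 1)"
        using that assms(1) by simp
      moreover have "even (l + k)"
        using that by (metis Suc_eq_plus1 even_Suc)
      ultimately show ?thesis
        using that(1) unfolding m_def by presburger
    qed
    ultimately show ?thesis by blast
  qed
  ultimately have "top_full (l + k) (compare_pairs m z)"
    using compare_pairs_top_full binary_zipseq[OF assms(4,5)] unfolding z_def by blast
  moreover have "oe_combine K a b = compare_pairs m z"
    unfolding z_def m_def by (rule oe_combine_eq_compare_pairs)
  ultimately show ?thesis by simp
qed

end
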